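(* Let $X$ be a real normed space and let $w$ denote the weak topology on $X$ (generated by all norm-continuous linear functionals on $X$). Then every topologically linearly independent subset of $(X,w)$ is finite.
   Context: A subset $A\subseteq X\setminus\{0\}$ of a topological vector space $X$ is topologically linearly independent if for every neighborhood $W$ of $0$ there is a neighborhood $U$ of $0$ such that for every finite $F\subseteq A$ and reals $\{r_a: a\in F\}$, $\sum_{a\in F}r_a a\in U$ implies $r_a a\in W$ for all $a\in F$. *)

theory Defs
  imports "HOL-Analysis.Analysis"
begin

definition weak_topology :: "('a::real_normed_vector) topology" where
  "weak_topology = topology_generated_by
     {f -` U | f U. bounded_linear (f :: 'a \<Rightarrow> real) \<and> open U}"

definition nhd0 :: "('a::zero) topology \<Rightarrow> 'a set \<Rightarrow> bool" where
  "nhd0 T W \<longleftrightarrow> (\<exists>V. openin T V \<and> 0 \<in> V \<and> V \<subseteq> W)"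

definition top_lin_indep :: "('a::real_vector) topology \<Rightarrow> 'a set \<Rightarrow> bool" where
  "top_lin_indep T A \<longleftrightarrow> A \<subseteq> UNIV - {0} \<and>
     (\<forall>W. nhd0 T W \<longrightarrow> (\<exists>U. nhd0 T U \<and>
        (\<forall>F r. finite F \<longrightarrow> F \<subseteq> A \<longrightarrow> (\<Sum>a\<in>F. r a *\<^sub>R a) \<in> U \<longrightarrow>
           (\<forall>a\<in>F. r a *\<^sub>R a \<in> W))))"

end

theory Submission
  imports Defs
begin

text \<open>A bounded functional \<open>g\<close> gives the weak neighbourhood \<open>{|g| < 1}\<close>; its partner
  neighbourhood \<open>U\<close> contains the common kernel of finitely many functionals, and a nontrivial
  combination of more vectors than functionals lies in that kernel. Rescaling it shows that
  \<open>g\<close> vanishes on all but finitely many elements of a topologically linearly independent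
  set \<open>A\<close>. If \<open>A\<close> were infinite, Hahn--Banach norming functionals \<open>\<phi>\<^sub>s\<close> let us pick
  distinct \<open>x\<^sub>n \<in> A\<close> with \<open>\<phi>\<^bsub>x\<^sub>i\<^esub>(x\<^sub>n) = 0\<close> for \<open>i < n\<close>; then
  \<open>g = \<Sum>\<^sub>j 3\<^sup>-\<^sup>j \<phi>\<^bsub>x\<^sub>j\<^esub>\<close> is bounded and nonzero at every \<open>x\<^sub>m\<close>, a contradiction.\<close>

text \<open>The graph of a linear functional on a subspace of \<open>X\<close> dominated by the norm, as a
  subspace of \<open>X \<times> \<real>\<close>; single-valuedness follows from the domination.\<close>
definition norm_dominated_graph :: "('a::real_normed_vector \<times> real) set \<Rightarrow> bool" where
  "norm_dominated_graph G \<longleftrightarrow> subspace G \<and> (\<forall>(x, a)\<in>G. a \<le> norm x)"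

lemma norm_dominated_graph_single_valued:
  assumes "norm_dominated_graph G" "(x, a) \<in> G" "(x, b) \<in> G"
  shows "a = b"
proof -
  have sub: "subspace G" and dom: "\<And>x a. (x, a) \<in> G \<Longrightarrow> a \<le> norm x"
    using assms(1) unfolding norm_dominated_graph_def by auto
  have "(0, a - b) \<in> G" using subspace_diff[OF sub assms(2,3)] by simp
  moreover from subspace_neg[OF sub this] have "(0, b - a) \<in> G" by simp
  ultimately show ?thesis using dom[of 0 "a - b"] dom[of 0 "b - a"] by simp
qed

text \<open>The one-dimensional extension step of Hahn--Banach: a value \<open>c\<close> for the new
  direction \<open>y\<close> must lie between \<open>a - \<parallel>x - y\<parallel>\<close> and \<open>\<parallel>x' + y\<parallel> - a'\<close> for all
  \<open>(x, a), (x', a')\<close> in the graph, and the triangle inequality shows that such a \<open>c\<close> exists.\<close>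
lemma norm_dominated_graph_extend_value:
  assumes "norm_dominated_graph G"
  obtains c where "\<And>x a t. (x, a) \<in> G \<Longrightarrow> a + t * c \<le> norm (x + t *\<^sub>R y)"
proof -
  have sub: "subspace G" and dom: "\<And>x a. (x, a) \<in> G \<Longrightarrow> a \<le> norm x"
    using assms unfolding norm_dominated_graph_def by auto
  have sep: "a1 - norm (x1 - y) \<le> norm (x2 + y) - a2" if "(x1, a1) \<in> G" "(x2, a2) \<in> G"
    for x1 a1 x2 a2
  proof -
    have "a1 + a2 \<le> norm ((x1 - y) + (x2 + y))"
      using dom subspace_add[OF sub that] by fastforce
    also have "\<dots> \<le> norm (x1 - y) + norm (x2 + y)" by (rule norm_triangle_ineq)
    finally show ?thesis by simp
  qed
  define S where "S = {a - norm (x - y) | x a. (x, a) \<in> G}"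
  have "(0, 0) \<in> G" using subspace_0[OF sub] by (simp add: zero_prod_def)
  then have "S \<noteq> {}" and "bdd_above S"
    using sep unfolding S_def bdd_above_def by blast+
  define c where "c = Sup S"
  have lower: "a - norm (x - y) \<le> c" if "(x, a) \<in> G" for x a
    unfolding c_def using that \<open>bdd_above S\<close> by (intro cSup_upper) (auto simp: S_def)
  have upper: "c \<le> norm (x + y) - a" if "(x, a) \<in> G" for x a
    unfolding c_def using that \<open>S \<noteq> {}\<close> sep by (intro cSup_least) (auto simp: S_def)
  have "a + t * c \<le> norm (x + t *\<^sub>R y)" if xa: "(x, a) \<in> G" for x a t
  proof -
    have scaled: "(r *\<^sub>R x, r * a) \<in> G" for r
      using subspace_scale[OF sub xa, of r] by simp
    consider "t > 0" | "t = 0" | "t < 0" by linarith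
    then show ?thesis
    proof cases
      case 1
      have "t * c \<le> t * (norm (inverse t *\<^sub>R x + y) - inverse t * a)"
        using upper[OF scaled] 1 by (simp add: mult_left_mono)
      also have "\<dots> = norm (t *\<^sub>R (inverse t *\<^sub>R x + y)) - a"
        using 1 by (simp add: right_diff_distrib)
      finally show ?thesis using 1 by (simp add: scaleR_add_right)
    next
      case 2
      then show ?thesis using dom[OF xa] by simp
    next
      case 3
      define u where "u = - t"
      have "u > 0" using 3 by (simp add: u_def)
      have "a - norm (u *\<^sub>R (inverse u *\<^sub>R x - y))
          = u * (inverse u * a - norm (inverse u *\<^sub>R x - y))"
        using \<open>u > 0\<close> by (simp add: right_diff_distrib)
      also have "\<dots> \<le> u * c"
        using lower[OF scaled] \<open>u > 0\<close> by (simp add: mult_left_mono)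
      finally show ?thesis using \<open>u > 0\<close> by (simp add: scaleR_diff_right u_def)
    qed
  qed
  then show ?thesis by (rule that)
qed

lemma norm_dominated_graph_extend:
  assumes "norm_dominated_graph G"
  obtains c where "norm_dominated_graph (span (insert (y, c) G))"
proof -
  obtain c where c: "\<And>x a t. (x, a) \<in> G \<Longrightarrow> a + t * c \<le> norm (x + t *\<^sub>R y)"
    using norm_dominated_graph_extend_value[OF assms] by blast
  have span_G: "span G = G" using assms by (simp add: norm_dominated_graph_def)
  have "b \<le> norm z" if zb: "(z, b) \<in> span (insert (y, c) G)" for z b
  proof -
    obtain t where "(z, b) - t *\<^sub>R (y, c) \<in> G"
      using zb unfolding span_insert span_G by blast
    then have "(z - t *\<^sub>R y, b - t * c) \<in> G" by simp
    from c[OF this, of t] show ?thesis by simp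
  qed
  then show ?thesis by (intro that) (auto simp: norm_dominated_graph_def)
qed

lemma subspace_Union_chain:
  assumes "C \<noteq> {}" "\<And>S. S \<in> C \<Longrightarrow> subspace S" "chain\<^sub>\<subseteq> C"
  shows "subspace (\<Union>C)"
  unfolding subspace_def
proof (intro conjI ballI allI)
  show "0 \<in> \<Union>C" using assms(1,2) subspace_0 by blast
next
  fix x y assume "x \<in> \<Union>C" "y \<in> \<Union>C"
  then obtain S T where "S \<in> C" "T \<in> C" "x \<in> S" "y \<in> T" by blast
  with assms(3) consider "x \<in> T" "y \<in> T" | "x \<in> S" "y \<in> S"
    unfolding chain_subset_def by blast
  then show "x + y \<in> \<Union>C"
    using \<open>S \<in> C\<close> \<open>T \<in> C\<close> assms(2) subspace_add by cases blast+
next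
  fix c x assume "x \<in> \<Union>C"
  then show "c *\<^sub>R x \<in> \<Union>C" using assms(2) subspace_scale by blast
qed

lemma norm_dominated_graph_Union_chain:
  assumes "C \<noteq> {}" "\<And>G. G \<in> C \<Longrightarrow> norm_dominated_graph G" "chain\<^sub>\<subseteq> C"
  shows "norm_dominated_graph (\<Union>C)"
proof -
  have "subspace (\<Union>C)"
    using assms(2)
    by (intro subspace_Union_chain[OF assms(1) _ assms(3)]) (simp add: norm_dominated_graph_def)
  moreover have "\<forall>(x, a)\<in>\<Union>C. a \<le> norm x"
    using assms(2) unfolding norm_dominated_graph_def by fast
  ultimately show ?thesis by (simp add: norm_dominated_graph_def)
qed

lemma norm_dominated_graph_maximal_total:
  assumes "norm_dominated_graph G"
    and maximal: "\<And>H. norm_dominated_graph H \<Longrightarrow> G \<subseteq> H \<Longrightarrow> H = G"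
  shows "\<exists>a. (y, a) \<in> G"
proof -
  obtain c where "norm_dominated_graph (span (insert (y, c) G))"
    using norm_dominated_graph_extend[OF assms(1)] by blast
  moreover have "G \<subseteq> span (insert (y, c) G)" by (rule order_trans[OF subset_insertI span_superset])
  ultimately have "span (insert (y, c) G) = G" by (rule maximal)
  then have "(y, c) \<in> G" using span_base[of "(y, c)" "insert (y, c) G"] by simp
  then show ?thesis ..
qed

lemma norm_dominated_graph_maximal_exists:
  assumes "norm_dominated_graph G0"
  obtains G where "norm_dominated_graph G" "G0 \<subseteq> G"
    "\<And>H. norm_dominated_graph H \<Longrightarrow> G \<subseteq> H \<Longrightarrow> H = G"
proof -
  define Fam where "Fam = {G. norm_dominated_graph G \<and> G0 \<subseteq> G}"
  have "\<exists>M\<in>Fam. \<forall>X\<in>Fam. M \<subseteq> X \<longrightarrow> X = M"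
  proof (rule Zorn_Lemma2, intro ballI)
    fix C assume C: "C \<in> chains Fam"
    show "\<exists>U\<in>Fam. \<forall>X\<in>C. X \<subseteq> U"
    proof (cases "C = {}")
      case True
      have "G0 \<in> Fam" using assms by (simp add: Fam_def)
      with True show ?thesis by blast
    next
      case False
      have "C \<subseteq> Fam" "chain\<^sub>\<subseteq> C" using C by (auto simp: chains_def)
      then have "norm_dominated_graph (\<Union>C)"
        using False by (intro norm_dominated_graph_Union_chain) (auto simp: Fam_def)
      moreover have "G0 \<subseteq> \<Union>C" using False \<open>C \<subseteq> Fam\<close> unfolding Fam_def by blast
      ultimately have "\<Union>C \<in> Fam" by (simp add: Fam_def)
      then show ?thesis by blast
    qed
  qed
  then obtain G where "G \<in> Fam" and maximal: "\<And>H. H \<in> Fam \<Longrightarrow> G \<subseteq> H \<Longrightarrow> H = G"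
    by blast
  then have "norm_dominated_graph G" "G0 \<subseteq> G" by (simp_all add: Fam_def)
  moreover have "H = G" if "norm_dominated_graph H" "G \<subseteq> H" for H
    using that \<open>G0 \<subseteq> G\<close> by (intro maximal) (auto simp: Fam_def)
  ultimately show ?thesis by (rule that)
qed

theorem norming_functional_exists:
  fixes s :: "'a::real_normed_vector"
  obtains \<phi> :: "'a \<Rightarrow> real"
  where "bounded_linear \<phi>" "\<phi> s = norm s" "\<And>y. \<bar>\<phi> y\<bar> \<le> norm y"
proof -
  define G0 where "G0 = span {(s, norm s)}"
  have "G0 = range (\<lambda>t. (t *\<^sub>R s, t * norm s))"
    by (auto simp: G0_def span_singleton)
  then have "\<forall>(x, a)\<in>G0. a \<le> norm x"
    by (clarsimp simp: abs_mult) (metis abs_ge_self mult_right_mono norm_ge_zero)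
  then have "norm_dominated_graph G0"
    by (simp add: norm_dominated_graph_def G0_def)
  then obtain G where G: "norm_dominated_graph G" "G0 \<subseteq> G"
    and maximal: "\<And>H. norm_dominated_graph H \<Longrightarrow> G \<subseteq> H \<Longrightarrow> H = G"
    by (rule norm_dominated_graph_maximal_exists) (rule that)
  have sub: "subspace G" and dom: "\<And>x a. (x, a) \<in> G \<Longrightarrow> a \<le> norm x"
    using G(1) unfolding norm_dominated_graph_def by auto
  define \<phi> where "\<phi> y = (SOME a. (y, a) \<in> G)" for y
  have graph: "(y, \<phi> y) \<in> G" for y
    unfolding \<phi>_def using norm_dominated_graph_maximal_total[OF G(1) maximal] by (rule someI_ex)
  have graph_unique: "\<phi> y = a" if "(y, a) \<in> G" for y a
    using norm_dominated_graph_single_valued[OF G(1) graph that] .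
  have add: "\<phi> (x + y) = \<phi> x + \<phi> y" for x y
    using graph_unique subspace_add[OF sub graph graph] by simp
  have scale: "\<phi> (r *\<^sub>R x) = r *\<^sub>R \<phi> x" for r x
    using graph_unique subspace_scale[OF sub graph] by simp
  have bound: "\<bar>\<phi> y\<bar> \<le> norm y" for y
    using dom[OF graph, of y] dom[OF graph, of "- y"] scale[of "- 1" y] by simp
  show ?thesis
  proof
    show "bounded_linear \<phi>"
      using add scale bound by (intro bounded_linear_intro[where K = 1]) auto
    have "(s, norm s) \<in> G" using G(2) span_base[of "(s, norm s)"] by (auto simp: G0_def)
    then show "\<phi> s = norm s" by (rule graph_unique)
  qed (rule bound)
qed

lemma norming_functional_family:
  obtains \<phi> :: "'a::real_normed_vector \<Rightarrow> 'a \<Rightarrow> real"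
  where "\<And>s. bounded_linear (\<phi> s)" "\<And>s. \<phi> s s = norm s" "\<And>s y. \<bar>\<phi> s y\<bar> \<le> norm y"
proof -
  have "\<exists>\<phi>. bounded_linear \<phi> \<and> \<phi> s = norm s \<and> (\<forall>y. \<bar>\<phi> y\<bar> \<le> norm y)" for s :: 'a
    by (meson norming_functional_exists)
  then show ?thesis using that by metis
qed

lemma openin_weak_topology_kernel_coset:
  assumes "openin weak_topology V" "x \<in> V"
  shows "\<exists>G::('a::real_normed_vector \<Rightarrow> real) set.
    finite G \<and> (\<forall>g\<in>G. bounded_linear g) \<and> {y. \<forall>g\<in>G. g y = g x} \<subseteq> V"
proof -
  have "generate_topology_on {f -` U | f U. bounded_linear (f :: 'a \<Rightarrow> real) \<and> open U} V"
    using assms(1) unfolding weak_topology_def by (rule openin_topology_generated_by)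
  then show ?thesis
    using assms(2)
  proof (induction arbitrary: x rule: generate_topology_on.induct)
    case (Int a b)
    then have "x \<in> a" "x \<in> b" by auto
    from Int.IH(1)[OF \<open>x \<in> a\<close>] obtain G1 :: "('a \<Rightarrow> real) set"
      where "finite G1" "\<forall>g\<in>G1. bounded_linear g" "{y. \<forall>g\<in>G1. g y = g x} \<subseteq> a"
      by blast
    moreover from Int.IH(2)[OF \<open>x \<in> b\<close>] obtain G2 :: "('a \<Rightarrow> real) set"
      where "finite G2" "\<forall>g\<in>G2. bounded_linear g" "{y. \<forall>g\<in>G2. g y = g x} \<subseteq> b"
      by blast
    ultimately show ?case by (intro exI[of _ "G1 \<union> G2"]) auto
  next
    case (UN K)
    then obtain k where "k \<in> K" "x \<in> k" by blast
    with UN.IH[of k x] show ?case by blast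
  next
    case (Basis s)
    then have "\<exists>f U. s = f -` U \<and> bounded_linear (f :: 'a \<Rightarrow> real) \<and> open U"
      by (simp only: mem_Collect_eq)
    then obtain f :: "'a \<Rightarrow> real" and U where "s = f -` U" "bounded_linear f"
      by blast
    then show ?case using Basis.prems by (intro exI[of _ "{f}"]) auto
  qed simp
qed

lemma nhd0_weak_topology_contains_kernel:
  assumes "nhd0 weak_topology W"
  obtains G :: "('a::real_normed_vector \<Rightarrow> real) set"
  where "finite G" "\<forall>g\<in>G. bounded_linear g" "{y. \<forall>g\<in>G. g y = 0} \<subseteq> W"
proof -
  obtain V where V: "openin weak_topology V" "0 \<in> V" "V \<subseteq> W"
    using assms unfolding nhd0_def by blast
  from openin_weak_topology_kernel_coset[OF V(1,2)] obtain G :: "('a \<Rightarrow> real) set"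
    where G: "finite G" "\<forall>g\<in>G. bounded_linear g" "{y. \<forall>g\<in>G. g y = g 0} \<subseteq> V"
    by (elim exE conjE)
  have "{y. \<forall>g\<in>G. g y = 0} \<subseteq> W"
    using G(2,3) V(3) by (fastforce simp: linear_simps)
  with G(1,2) show ?thesis by (rule that)
qed

lemma nhd0_weak_topology_vimage:
  fixes g :: "'a::real_normed_vector \<Rightarrow> real"
  assumes "bounded_linear g" "open U" "0 \<in> U"
  shows "nhd0 weak_topology (g -` U)"
proof -
  have "\<exists>f V. g -` U = f -` V \<and> bounded_linear (f :: 'a \<Rightarrow> real) \<and> open V"
    using assms(1,2) by (intro exI[of _ g] exI[of _ U]) simp
  then have "openin weak_topology (g -` U)"
    unfolding weak_topology_def by (intro topology_generated_by_Basis) (simp only: mem_Collect_eq)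
  moreover have "0 \<in> g -` U" using assms by (simp add: linear_simps)
  ultimately show ?thesis unfolding nhd0_def by blast
qed

text \<open>A homogeneous linear system with fewer equations than unknowns has a nontrivial
  solution; the induction eliminates one equation \<open>h\<close> by pivoting on a vector \<open>v j\<close> with
  \<open>h (v j) \<noteq> 0\<close>.\<close>
lemma linear_functionals_common_kernel_combination:
  fixes H :: "('a::real_vector \<Rightarrow> real) set" and v :: "'i \<Rightarrow> 'a"
  assumes "finite H" "\<forall>h\<in>H. linear h" "finite F" "card H < card F"
  shows "\<exists>r. (\<exists>i\<in>F. r i \<noteq> 0) \<and> (\<forall>h\<in>H. h (\<Sum>i\<in>F. r i *\<^sub>R v i) = 0)"
  using assms
proof (induction H arbitrary: F v rule: finite_induct)
  case empty
  then have "F \<noteq> {}" by auto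
  then show ?case by (intro exI[of _ "\<lambda>_. 1"]) auto
next
  case (insert h H)
  have h: "linear h" and lin: "\<forall>h\<in>H. linear h" using insert.prems by auto
  have card: "card H + 1 < card F" using insert.prems insert.hyps by simp
  show ?case
  proof (cases "\<forall>i\<in>F. h (v i) = 0")
    case True
    obtain r where r: "\<exists>i\<in>F. r i \<noteq> 0" "\<forall>h\<in>H. h (\<Sum>i\<in>F. r i *\<^sub>R v i) = 0"
      using insert.IH[OF lin insert.prems(2), of v] card by auto
    have "h (\<Sum>i\<in>F. r i *\<^sub>R v i) = (\<Sum>i\<in>F. r i * h (v i))"
      using h by (simp add: linear_sum linear_scale)
    also have "\<dots> = 0" using True by simp
    finally show ?thesis using r by auto
  next
    case False
    then obtain j where j: "j \<in> F" "h (v j) \<noteq> 0" by blast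
    define F' where "F' = F - {j}"
    define w where "w i = v i - (h (v i) / h (v j)) *\<^sub>R v j" for i
    have hw: "h (w i) = 0" for i
      using h j(2) unfolding w_def by (simp add: linear_diff linear_scale)
    have "finite F'" "card H < card F'"
      using card j insert.prems(2) by (simp_all add: F'_def)
    then obtain s where s: "\<exists>i\<in>F'. s i \<noteq> 0" "\<forall>h\<in>H. h (\<Sum>i\<in>F'. s i *\<^sub>R w i) = 0"
      using insert.IH[OF lin, of F' w] by blast
    define r where "r i = (if i = j then - (\<Sum>k\<in>F'. s k * h (v k) / h (v j)) else s i)" for i
    have "(\<Sum>i\<in>F. r i *\<^sub>R v i) = r j *\<^sub>R v j + (\<Sum>i\<in>F'. s i *\<^sub>R v i)"
      using j insert.prems(2) unfolding F'_def by (simp add: sum.remove r_def)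
    also have "\<dots> = (\<Sum>i\<in>F'. s i *\<^sub>R w i)"
      by (simp add: w_def r_def scaleR_diff_right sum_subtractf scaleR_sum_left)
    finally have combination: "(\<Sum>i\<in>F. r i *\<^sub>R v i) = (\<Sum>i\<in>F'. s i *\<^sub>R w i)" .
    have "h (\<Sum>i\<in>F'. s i *\<^sub>R w i) = 0"
      using h hw by (simp add: linear_sum linear_scale)
    then have "\<forall>h'\<in>insert h H. h' (\<Sum>i\<in>F. r i *\<^sub>R v i) = 0"
      using s(2) unfolding combination by auto
    moreover obtain i0 where "i0 \<in> F'" "s i0 \<noteq> 0" using s by blast
    then have "i0 \<in> F" "r i0 \<noteq> 0" by (auto simp: r_def F'_def)
    ultimately show ?thesis by blast
  qed
qed

lemma top_lin_indep_weak_finite_support: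
  fixes A :: "'a::real_normed_vector set" and g :: "'a \<Rightarrow> real"
  assumes indep: "top_lin_indep weak_topology A" and g: "bounded_linear g"
  shows "finite {a\<in>A. g a \<noteq> 0}"
proof (rule ccontr)
  assume infinite: "infinite {a\<in>A. g a \<noteq> 0}"
  have "nhd0 weak_topology (g -` {-1<..<1})"
    using g by (intro nhd0_weak_topology_vimage) auto
  with indep obtain U where "nhd0 weak_topology U"
    and small: "\<And>F r. finite F \<Longrightarrow> F \<subseteq> A \<Longrightarrow> (\<Sum>a\<in>F. r a *\<^sub>R a) \<in> U \<Longrightarrow>
      \<forall>a\<in>F. \<bar>g (r a *\<^sub>R a)\<bar> < 1"
    unfolding top_lin_indep_def by (auto simp: abs_less_iff)
  from \<open>nhd0 weak_topology U\<close> obtain H :: "('a \<Rightarrow> real) set"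
    where H: "finite H" "\<forall>h\<in>H. bounded_linear h" "{y. \<forall>h\<in>H. h y = 0} \<subseteq> U"
    by (rule nhd0_weak_topology_contains_kernel)
  obtain F where F: "finite F" "card F = card H + 1" "F \<subseteq> {a\<in>A. g a \<noteq> 0}"
    using infinite_arbitrarily_large[OF infinite] by blast
  have lin: "\<forall>h\<in>H. linear h" using H(2) bounded_linear.linear by blast
  have "card H < card F" using F(2) by simp
  then obtain r where r: "\<exists>i\<in>F. r i \<noteq> 0" "\<forall>h\<in>H. h (\<Sum>i\<in>F. r i *\<^sub>R i) = 0"
    using linear_functionals_common_kernel_combination[OF H(1) lin F(1), of "\<lambda>i. i"] by blast
  then obtain a where a: "a \<in> F" "r a \<noteq> 0" by blast
  define t where "t = 1 / (r a * g a)"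
  have "(\<Sum>i\<in>F. (t * r i) *\<^sub>R i) = t *\<^sub>R (\<Sum>i\<in>F. r i *\<^sub>R i)"
    by (simp add: scaleR_sum_right)
  moreover have "h (t *\<^sub>R (\<Sum>i\<in>F. r i *\<^sub>R i)) = 0" if "h \<in> H" for h
    using r(2) that lin by (simp add: linear_scale)
  ultimately have "(\<Sum>i\<in>F. (t * r i) *\<^sub>R i) \<in> U" using H(3) by auto
  moreover have "F \<subseteq> A" using F(3) by blast
  ultimately have "\<bar>g ((t * r a) *\<^sub>R a)\<bar> < 1"
    using small[OF F(1), of "\<lambda>i. t * r i"] a(1) by blast
  moreover have "g a \<noteq> 0" using a(1) F(3) by blast
  then have "g ((t * r a) *\<^sub>R a) = 1"
    using g a(2) by (simp add: linear_simps t_def)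
  ultimately show False by simp
qed

lemma top_lin_indep_weak_avoid_kernels:
  fixes A :: "'a::real_normed_vector set" and \<phi> :: "'a \<Rightarrow> 'a \<Rightarrow> real"
  assumes "top_lin_indep weak_topology A" "infinite A" "finite S" "\<And>s. bounded_linear (\<phi> s)"
  shows "\<exists>a\<in>A - S. \<forall>s\<in>S. \<phi> s a = 0"
proof -
  have "finite (S \<union> (\<Union>s\<in>S. {a\<in>A. \<phi> s a \<noteq> 0}))"
    using assms(3) top_lin_indep_weak_finite_support[OF assms(1,4)] by blast
  then have "\<not> A \<subseteq> S \<union> (\<Union>s\<in>S. {a\<in>A. \<phi> s a \<noteq> 0})"
    using assms(2) finite_subset by blast
  then show ?thesis by blast
qed

lemma bounded_linear_suminf:
  fixes \<phi> :: "nat \<Rightarrow> 'a::real_normed_vector \<Rightarrow> real"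
  assumes lin: "\<And>j. bounded_linear (\<phi> j)" and bound: "\<And>j y. \<bar>\<phi> j y\<bar> \<le> w j * norm y"
    and "summable w"
  shows "bounded_linear (\<lambda>y. \<Sum>j. \<phi> j y)"
proof (rule bounded_linear_intro[where K = "suminf w"])
  have dominating: "summable (\<lambda>j. w j * norm y)" for y
    using \<open>summable w\<close> by (rule summable_mult2)
  have summable: "summable (\<lambda>j. \<phi> j y)" for y
    using bound by (intro summable_comparison_test'[OF dominating]) auto
  show "(\<Sum>j. \<phi> j (y + z)) = (\<Sum>j. \<phi> j y) + (\<Sum>j. \<phi> j z)" for y z
    using lin by (simp add: linear_simps suminf_add[OF summable summable])
  show "(\<Sum>j. \<phi> j (r *\<^sub>R y)) = r *\<^sub>R (\<Sum>j. \<phi> j y)" for r y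
    using lin by (simp add: linear_simps suminf_mult[OF summable])
  show "norm (\<Sum>j. \<phi> j y) \<le> norm y * suminf w" for y
  proof -
    have "norm (\<Sum>j. \<phi> j y) \<le> (\<Sum>j. w j * norm y)"
      using bound by (intro norm_suminf_le dominating) auto
    also have "\<dots> = norm y * suminf w"
      using suminf_mult2[OF \<open>summable w\<close>] by (simp add: mult.commute)
    finally show ?thesis .
  qed
qed

text \<open>The leading term \<open>3\<^sup>-\<^sup>m c\<close> outweighs the whole tail,
  which is at most \<open>\<Sum>j>m. 3\<^sup>-\<^sup>j c = 3\<^sup>-\<^sup>m c / 2\<close>.\<close>
lemma suminf_third_powers_pos:
  fixes f :: "nat \<Rightarrow> real"
  assumes zero: "\<And>j. j < m \<Longrightarrow> f j = 0" and "f m = c"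
    and bound: "\<And>j. \<bar>f j\<bar> \<le> c" and "0 < c"
  shows "0 < (\<Sum>j. (1/3)^j * f j)"
proof -
  define h where "h = (\<lambda>j. (1/3::real)^j * f j)"
  have geometric: "summable (\<lambda>j. (1/3::real)^j)" "(\<Sum>j. (1/3::real)^j) = 3/2"
    by (simp_all add: summable_geometric suminf_geometric)
  have h_bound: "\<bar>h j\<bar> \<le> (1/3)^j * c" for j
    using bound[of j] by (simp add: h_def abs_mult mult_left_mono)
  have "summable h"
    using h_bound by (intro summable_comparison_test'[OF summable_mult2[OF geometric(1)]]) auto
  have head: "(\<Sum>i<Suc m. h i) = (1/3)^m * c"
    using zero \<open>f m = c\<close> by (simp add: h_def)
  have "norm (\<Sum>n. h (n + Suc m)) \<le> (\<Sum>n. (1/3)^n * ((1/3)^Suc m * c))"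
  proof (rule norm_suminf_le)
    show "norm (h (n + Suc m)) \<le> (1/3)^n * ((1/3)^Suc m * c)" for n
      using h_bound[of "n + Suc m"] by (simp add: power_add mult_ac)
  qed (rule summable_mult2[OF geometric(1)])
  also have "\<dots> = (\<Sum>n. (1/3::real)^n) * ((1/3)^Suc m * c)"
    by (rule suminf_mult2[OF geometric(1), symmetric])
  also have "\<dots> = (1/3)^m * c / 2"
    using geometric(2) by simp
  finally have tail: "- ((1/3)^m * c / 2) \<le> (\<Sum>n. h (n + Suc m))"
    by (simp add: abs_le_iff)
  have "0 < (1/3::real)^m * c" using \<open>0 < c\<close> by simp
  with head tail have "0 < (\<Sum>n. h (n + Suc m)) + (\<Sum>i<Suc m. h i)" by linarith
  also have "\<dots> = suminf h"
    by (rule suminf_split_initial_segment[OF \<open>summable h\<close>, symmetric])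
  finally show ?thesis by (simp add: h_def)
qed

lemma inj_sequence_avoiding_finite:
  assumes "\<And>S. finite S \<Longrightarrow> \<exists>a\<in>A - S. P S a"
  obtains x :: "nat \<Rightarrow> 'a" where "inj x" "range x \<subseteq> A" "\<And>n. P (x ` {..<n}) (x n)"
proof -
  have "\<exists>x. \<forall>n::nat. x n \<in> A - x ` {..<n} \<and> P (x ` {..<n}) (x n)"
  proof (rule dependent_wellorder_choice
      [where P = "\<lambda>f n a. a \<in> A - f ` {..<n} \<and> P (f ` {..<n}) a"])
    fix f g :: "nat \<Rightarrow> 'a" and n :: nat and a
    assume "\<And>i. i < n \<Longrightarrow> f i = g i"
    then have "f ` {..<n} = g ` {..<n}" by (intro image_cong) auto
    then show "(a \<in> A - f ` {..<n} \<and> P (f ` {..<n}) a) =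
        (a \<in> A - g ` {..<n} \<and> P (g ` {..<n}) a)"
      by simp
  next
    fix n :: nat and f :: "nat \<Rightarrow> 'a"
    show "\<exists>a. a \<in> A - f ` {..<n} \<and> P (f ` {..<n}) a"
      using assms[of "f ` {..<n}"] by blast
  qed
  then obtain x :: "nat \<Rightarrow> 'a"
    where x: "\<And>n. x n \<in> A - x ` {..<n}" "\<And>n. P (x ` {..<n}) (x n)"
    by blast
  have "inj x"
  proof (rule linorder_injI)
    fix i n :: nat assume "i < n"
    then have "x i \<in> x ` {..<n}" by simp
    then show "x i \<noteq> x n" using x(1)[of n] by auto
  qed
  with x show ?thesis by (intro that) auto
qed

lemma functional_nonzero_on_triangular_sequence:
  fixes \<phi> :: "nat \<Rightarrow> 'a::real_normed_vector \<Rightarrow> real" and x :: "nat \<Rightarrow> 'a"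
  assumes "\<And>j. bounded_linear (\<phi> j)" "\<And>j y. \<bar>\<phi> j y\<bar> \<le> norm y"
    and "\<And>n. \<phi> n (x n) = norm (x n)" "\<And>i n. i < n \<Longrightarrow> \<phi> i (x n) = 0" "\<And>n. x n \<noteq> 0"
  obtains g :: "'a \<Rightarrow> real" where "bounded_linear g" "\<And>n. g (x n) \<noteq> 0"
proof -
  define g where "g = (\<lambda>y. \<Sum>j. (1/3::real)^j * \<phi> j y)"
  have "bounded_linear g"
    unfolding g_def using assms(1,2)
    by (intro bounded_linear_suminf[where w = "\<lambda>j. (1/3)^j"] bounded_linear_const_mult)
      (auto simp: abs_mult mult_left_mono summable_geometric)
  moreover have "g (x n) \<noteq> 0" for n
  proof -
    have "0 < g (x n)"
      unfolding g_def using assms(2-5) by (intro suminf_third_powers_pos[where m = n]) auto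
    then show ?thesis by simp
  qed
  ultimately show ?thesis by (rule that)
qed

theorem proposition4p7:
  fixes A :: "'a::real_normed_vector set"
  assumes "top_lin_indep weak_topology A"
  shows "finite A"
proof (rule ccontr)
  assume "infinite A"
  obtain \<phi> :: "'a \<Rightarrow> 'a \<Rightarrow> real" where \<phi>: "\<And>s. bounded_linear (\<phi> s)"
    "\<And>s. \<phi> s s = norm s" "\<And>s y. \<bar>\<phi> s y\<bar> \<le> norm y"
    by (rule norming_functional_family) (rule that)
  obtain x :: "nat \<Rightarrow> 'a" where "inj x" "range x \<subseteq> A"
    and kernel: "\<And>n. \<forall>s\<in>x ` {..<n}. \<phi> s (x n) = 0"
    using top_lin_indep_weak_avoid_kernels[OF assms \<open>infinite A\<close> _ \<phi>(1)]
    by (rule inj_sequence_avoiding_finite[where P = "\<lambda>S a. \<forall>s\<in>S. \<phi> s a = 0"]) auto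
  have "0 \<notin> A" using assms unfolding top_lin_indep_def by auto
  moreover have "x n \<in> A" for n using \<open>range x \<subseteq> A\<close> by blast
  ultimately have nonzero: "x n \<noteq> 0" for n by metis
  have triangular: "\<And>i n. i < n \<Longrightarrow> \<phi> (x i) (x n) = 0" using kernel by blast
  obtain g :: "'a \<Rightarrow> real" where "bounded_linear g" "\<And>n. g (x n) \<noteq> 0"
    by (rule functional_nonzero_on_triangular_sequence[of "\<lambda>j. \<phi> (x j)" x,
          OF \<phi>(1) \<phi>(3) \<phi>(2) triangular nonzero]) (assumption | rule that)+
  then have "range x \<subseteq> {a\<in>A. g a \<noteq> 0}" using \<open>range x \<subseteq> A\<close> by auto
  with top_lin_indep_weak_finite_support[OF assms \<open>bounded_linear g\<close>] \<open>inj x\<close>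
  show False using finite_subset range_inj_infinite by blast
qed

end
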